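(* Let $\hat G$ be a $C_2$-graded finite group acting on $\mathbb C[[u,v]]$ by degree-preserving generalized algebra automorphisms preserving $uv$. The matrix factorization $\{u,v\}\in\mathrm{MF}(\mathbb C[[u,v]],uv)$ admits a Real $G$-equivariant structure (i.e. can be lifted to an object of $\mathrm{MF}_{\hat G}(\mathbb C[[u,v]],uv)$) if and only if there exists $\chi\in Z^1(\hat G;\mathbb C^\times_\pi)$ with $\sigma(u)=\chi(\sigma)u$ and $\sigma(v)=\chi(\sigma)^{-1}v$ for all $\sigma\in\hat G$. In that case the set of dg isomorphism classes of Real $G$-equivariant structures on $\{u,v\}$ is in bijection with $H^1(\hat G;\mathbb C[[u,v]]^\times_\pi)$.
   Context: $C_2=\{\pm1\}$; $\pi:\hat G\to C_2$, $G=\ker\pi$. $\mathbb C^\times_\pi$ is $\mathbb C^\times$ with $\hat G$ acting through $\pi$ by complex conjugation; $\mathbb C[[u,v]]^\times_\pi$ is the group of units with $\hat G$ acting through its given action on $\mathbb C[[u,v]]$; $Z^1$, $H^1$ are (normalized) group cocycles and cohomology. A generalized algebra automorphism is a ring automorphism which is $\mathbb C$-linear or $\mathbb C$-antilinear; $\sigma\in\hat G$ is linear iff $\pi(\sigma)=1$. $\mathrm{MF}(S,w)$: objects $(M,d_M)$, $M$ finite rank free $\mathbb Z/2$-graded $S$-module, $d_M$ odd with $d_M^2=w\,\mathrm{id}$; Hom complexes $\mathrm{Hom}_S(M,N)$ with $D(f)=d_Nf-(-1)^{|f|}fd_M$. $\{u,v\}$ is $S\oplus S$ with $d^0=u:M_0\to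 M_1$, $d^1=v:M_1\to M_0$. $M^\sigma$ is $M$ with $r\cdot m=\sigma^{-1}(r)m$. The functors $\rho(\sigma)(M,d_M)=(M^\sigma,d_M^\sigma)$ with identity coherence maps give a Real 2-representation of $G$; a Real $G$-equivariant structure on $M$ is a family of closed degree-0 isomorphisms $u_\sigma:M\to M^\sigma$ with $u_{\sigma_2\sigma_1}=(u_{\sigma_1})^{\sigma_2}\circ u_{\sigma_2}$; $\mathrm{MF}_{\hat G}$ is the category of such pairs with morphisms $f$ satisfying $u'_\sigma f=f^\sigma u_\sigma$. *)

theory Defs
  imports "HOL-Algebra.Group" "HOL-Computational_Algebra.Formal_Power_Series"
begin

text \<open>We model C[[u,v]] as (C[[u]])[[v]]: the outer power-series variable is v,
  the inner one is u.  This is canonically isomorphic to C[[u,v]] as a C-algebra.\<close>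

type_synonym S = "complex fps fps"

definition U :: S where "U = fps_const fps_X"
definition V :: S where "V = fps_X"

definition sc :: "complex \<Rightarrow> S" where "sc c = fps_const (fps_const c)"

definition coeff2 :: "S \<Rightarrow> nat \<Rightarrow> nat \<Rightarrow> complex" where
  "coeff2 f i j = fps_nth (fps_nth f j) i"

definition hom_deg :: "nat \<Rightarrow> S \<Rightarrow> bool" where
  "hom_deg d f \<longleftrightarrow> (\<forall>i j. coeff2 f i j \<noteq> 0 \<longrightarrow> i + j = d)"

definition degree_preserving :: "(S \<Rightarrow> S) \<Rightarrow> bool" where
  "degree_preserving \<phi> \<longleftrightarrow> (\<forall>d f. hom_deg d f \<longrightarrow> hom_deg d (\<phi> f))"

definition C2_graded_group :: "('g, 'm) monoid_scheme \<Rightarrow> ('g \<Rightarrow> int) \<Rightarrow> bool" where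
  "C2_graded_group G \<pi> \<longleftrightarrow> group G \<and>
     (\<forall>\<sigma>\<in>carrier G. \<pi> \<sigma> = 1 \<or> \<pi> \<sigma> = -1) \<and>
     (\<forall>\<sigma>\<in>carrier G. \<forall>\<tau>\<in>carrier G. \<pi> (\<sigma> \<otimes>\<^bsub>G\<^esub> \<tau>) = \<pi> \<sigma> * \<pi> \<tau>)"

definition gen_alg_aut :: "int \<Rightarrow> (S \<Rightarrow> S) \<Rightarrow> bool" where
  "gen_alg_aut p \<phi> \<longleftrightarrow> bij \<phi> \<and>
     (\<forall>f g. \<phi> (f + g) = \<phi> f + \<phi> g) \<and>
     (\<forall>f g. \<phi> (f * g) = \<phi> f * \<phi> g) \<and> \<phi> 1 = 1 \<and>
     (p = 1 \<longrightarrow> (\<forall>c f. \<phi> (sc c * f) = sc c * \<phi> f)) \<and>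
     (p = -1 \<longrightarrow> (\<forall>c f. \<phi> (sc c * f) = sc (cnj c) * \<phi> f))"

definition valid_action ::
  "('g, 'm) monoid_scheme \<Rightarrow> ('g \<Rightarrow> int) \<Rightarrow> ('g \<Rightarrow> S \<Rightarrow> S) \<Rightarrow> bool" where
  "valid_action G \<pi> act \<longleftrightarrow>
     act \<one>\<^bsub>G\<^esub> = id \<and>
     (\<forall>\<sigma>\<in>carrier G. \<forall>\<tau>\<in>carrier G. act (\<sigma> \<otimes>\<^bsub>G\<^esub> \<tau>) = act \<sigma> \<circ> act \<tau>) \<and>
     (\<forall>\<sigma>\<in>carrier G. gen_alg_aut (\<pi> \<sigma>) (act \<sigma>) \<and> degree_preserving (act \<sigma>)
                      \<and> act \<sigma> (U * V) = U * V)"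

definition conj_pi :: "int \<Rightarrow> complex \<Rightarrow> complex" where
  "conj_pi p z = (if p = 1 then z else cnj z)"

definition Z1_C :: "('g, 'm) monoid_scheme \<Rightarrow> ('g \<Rightarrow> int) \<Rightarrow> ('g \<Rightarrow> complex) set" where
  "Z1_C G \<pi> = {\<chi>. (\<forall>\<sigma>\<in>carrier G. \<chi> \<sigma> \<noteq> 0) \<and> \<chi> \<one>\<^bsub>G\<^esub> = 1 \<and>
     (\<forall>\<sigma>\<in>carrier G. \<forall>\<tau>\<in>carrier G.
        \<chi> (\<sigma> \<otimes>\<^bsub>G\<^esub> \<tau>) = \<chi> \<sigma> * conj_pi (\<pi> \<sigma>) (\<chi> \<tau>))}"

definition Z1_S :: "('g, 'm) monoid_scheme \<Rightarrow> ('g \<Rightarrow> S \<Rightarrow> S) \<Rightarrow> ('g \<Rightarrow> S) set" where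
  "Z1_S G act = {c. (\<forall>\<sigma>\<in>carrier G. c \<sigma> dvd 1) \<and> c \<one>\<^bsub>G\<^esub> = 1 \<and>
     (\<forall>\<sigma>\<in>carrier G. \<forall>\<tau>\<in>carrier G.
        c (\<sigma> \<otimes>\<^bsub>G\<^esub> \<tau>) = c \<sigma> * act \<sigma> (c \<tau>))}"

definition cohom_S :: "('g, 'm) monoid_scheme \<Rightarrow> ('g \<Rightarrow> S \<Rightarrow> S) \<Rightarrow> (('g \<Rightarrow> S) \<times> ('g \<Rightarrow> S)) set" where
  "cohom_S G act = {(c, c'). c \<in> Z1_S G act \<and> c' \<in> Z1_S G act \<and>
     (\<exists>b. b dvd 1 \<and> (\<forall>\<sigma>\<in>carrier G. b * c' \<sigma> = c \<sigma> * act \<sigma> b))}"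

definition H1_S :: "('g, 'm) monoid_scheme \<Rightarrow> ('g \<Rightarrow> S \<Rightarrow> S) \<Rightarrow> ('g \<Rightarrow> S) set set" where
  "H1_S G act = Z1_S G act // cohom_S G act"

text \<open>{u,v} = S (+) S with d^0 = u : M_0 -> M_1 and d^1 = v : M_1 -> M_0.
  A degree-0 map M -> N of Z/2-graded modules is a pair (f0, f1) of component maps.
  The twisted module M^sigma has the same underlying group with r.m = sigma^{-1}(r) m,
  and d^sigma is the same underlying map as d.  A degree-0 map M -> M^sigma is thus a
  pair of additive maps semilinear w.r.t. sigma^{-1}; closedness means commuting with d.\<close>

definition semilin :: "(S \<Rightarrow> S) \<Rightarrow> (S \<Rightarrow> S) \<Rightarrow> bool" where
  "semilin \<theta> f \<longleftrightarrow> (\<forall>m n. f (m + n) = f m + f n) \<and> (\<forall>r m. f (r * m) = \<theta> r * f m)"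

definition closed_uv :: "(S \<Rightarrow> S) \<times> (S \<Rightarrow> S) \<Rightarrow> bool" where
  "closed_uv f \<longleftrightarrow> (\<forall>m. snd f (U * m) = U * fst f m) \<and> (\<forall>m. fst f (V * m) = V * snd f m)"

definition comp2 :: "(S \<Rightarrow> S) \<times> (S \<Rightarrow> S) \<Rightarrow> (S \<Rightarrow> S) \<times> (S \<Rightarrow> S) \<Rightarrow> (S \<Rightarrow> S) \<times> (S \<Rightarrow> S)" where
  "comp2 f g = (fst f \<circ> fst g, snd f \<circ> snd g)"

text \<open>Real G-equivariant structures on {u,v}: closed degree-0 isomorphisms
  u_sigma : M -> M^sigma with u_{sigma2 sigma1} = (u_{sigma1})^{sigma2} o u_{sigma2}.\<close>
definition real_eq_structs ::
  "('g, 'm) monoid_scheme \<Rightarrow> ('g \<Rightarrow> S \<Rightarrow> S) \<Rightarrow> ('g \<Rightarrow> (S \<Rightarrow> S) \<times> (S \<Rightarrow> S)) set" where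
  "real_eq_structs G act = {us.
     (\<forall>\<sigma>\<in>carrier G.
        semilin (act (inv\<^bsub>G\<^esub> \<sigma>)) (fst (us \<sigma>)) \<and> semilin (act (inv\<^bsub>G\<^esub> \<sigma>)) (snd (us \<sigma>)) \<and>
        bij (fst (us \<sigma>)) \<and> bij (snd (us \<sigma>)) \<and> closed_uv (us \<sigma>)) \<and>
     (\<forall>\<sigma>1\<in>carrier G. \<forall>\<sigma>2\<in>carrier G. us (\<sigma>2 \<otimes>\<^bsub>G\<^esub> \<sigma>1) = comp2 (us \<sigma>1) (us \<sigma>2))}"

text \<open>Isomorphism in MF_G-hat: a closed degree-0 S-linear isomorphism f : {u,v} -> {u,v}
  with u'_sigma f = f^sigma u_sigma (f^sigma has the same underlying map as f).\<close>
definition struct_iso ::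
  "('g, 'm) monoid_scheme \<Rightarrow> ('g \<Rightarrow> S \<Rightarrow> S) \<Rightarrow>
   (('g \<Rightarrow> (S \<Rightarrow> S) \<times> (S \<Rightarrow> S)) \<times> ('g \<Rightarrow> (S \<Rightarrow> S) \<times> (S \<Rightarrow> S))) set" where
  "struct_iso G act = {(us, us'). us \<in> real_eq_structs G act \<and> us' \<in> real_eq_structs G act \<and>
     (\<exists>f. semilin id (fst f) \<and> semilin id (snd f) \<and> bij (fst f) \<and> bij (snd f) \<and>
          closed_uv f \<and> (\<forall>\<sigma>\<in>carrier G. comp2 (us' \<sigma>) f = comp2 f (us \<sigma>)))}"

end

theory Submission
  imports Defs
begin

text \<open>Each component of a Real structure \<open>u\<^sub>\<sigma>\<close> is \<open>\<sigma>\<inverse>\<close>-semilinear and bijective, hence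
  of the form \<open>m \<mapsto> \<sigma>\<inverse>(m) \<cdot> e\<close> for a unit \<open>e\<close>.  Commuting with \<open>d\<^sup>0 = u\<close> then makes \<open>\<sigma>(u)\<close>
  a homogeneous degree-1 multiple of \<open>u\<close>, i.e. \<open>\<sigma>(u) = \<chi>(\<sigma>) u\<close>; the action law makes \<open>\<chi>\<close> a cocycle and
  \<open>\<sigma>(uv) = uv\<close> gives \<open>\<sigma>(v) = \<chi>(\<sigma>)\<inverse> v\<close>.  Conversely, given such \<open>\<chi>\<close>, the second component
  is determined by the first, and \<open>\<sigma> \<mapsto> u\<^sup>0\<^sub>\<sigma>\<^sub>\<inverse>(1)\<close> identifies Real structures with cocycles
  in \<open>Z\<^sup>1(G; S\<^sup>\<times>)\<close>, the composition law being the cocycle identity.  An isomorphism of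
  structures is multiplication by a unit, which changes the cocycle by a coboundary; so
  isomorphism classes correspond to \<open>H\<^sup>1\<close>.\<close>

lemma U_neq_zero: "U \<noteq> 0"
proof
  assume "U = 0"
  hence "fps_nth (fps_nth U 0) 1 = fps_nth (fps_nth (0::S) 0) 1" by simp
  thus False by (simp add: U_def)
qed

lemma sc_mult: "sc a * sc b = sc (a * b)"
  by (simp add: sc_def)

lemma sc_1 [simp]: "sc 1 = 1"
  by (simp add: sc_def)

lemma sc_eq_iff: "sc a = sc b \<longleftrightarrow> a = b"
proof
  assume "sc a = sc b"
  hence "fps_nth (fps_nth (sc a) 0) 0 = fps_nth (fps_nth (sc b) 0) 0" by simp
  thus "a = b" by (simp add: sc_def)
qed simp

lemma hom_deg_1_U: "hom_deg 1 U"
  by (auto simp: hom_deg_def coeff2_def U_def fps_X_def split: if_splits)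

lemma hom_deg_1_U_mult:
  assumes "hom_deg 1 (U * w)"
  shows "U * w = sc (coeff2 w 0 0) * U"
proof (rule fps_ext, rule fps_ext)
  fix j i
  have lhs: "fps_nth (fps_nth (U * w) j) i = (if i = 0 then 0 else coeff2 w (i - 1) j)"
    by (simp add: U_def coeff2_def)
  have rhs: "fps_nth (fps_nth (sc (coeff2 w 0 0) * U) j) i =
      (if i = 1 \<and> j = 0 then coeff2 w 0 0 else 0)"
    by (simp add: U_def sc_def fps_X_def)
  have "coeff2 (U * w) i j = 0" if "\<not> (i = 1 \<and> j = 0)"
  proof (rule ccontr)
    assume nz: "coeff2 (U * w) i j \<noteq> 0"
    with assms have "i + j = 1" by (simp add: hom_deg_def)
    with that have "i = 0" by auto
    with nz lhs show False by (simp add: coeff2_def)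
  qed
  thus "fps_nth (fps_nth (U * w) j) i = fps_nth (fps_nth (sc (coeff2 w 0 0) * U) j) i"
    using lhs rhs by (auto simp: coeff2_def)
qed

lemma conj_pi_inverse: "conj_pi p (inverse a) = inverse (conj_pi p a)"
  by (simp add: conj_pi_def complex_cnj_inverse)

lemma semilin_apply: "semilin \<theta> f \<Longrightarrow> f m = \<theta> m * f 1"
  unfolding semilin_def by (metis mult.right_neutral)

lemma semilin_bij_unit:
  assumes "semilin \<theta> f" "bij f"
  shows "f 1 dvd 1"
proof -
  obtain m where "f m = 1" using assms(2) by (metis bij_pointE)
  hence "1 = f 1 * \<theta> m" using semilin_apply[OF assms(1), of m] by (simp add: mult.commute)
  thus ?thesis by (rule dvdI)
qed

lemma bij_mult_right_unit:
  fixes \<theta> :: "'a \<Rightarrow> 'b::comm_monoid_mult"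
  assumes "bij \<theta>" "x * x' = 1"
  shows "bij (\<lambda>m. \<theta> m * x)"
proof (rule bijI)
  show "inj (\<lambda>m. \<theta> m * x)"
  proof (rule injI)
    fix m n assume "\<theta> m * x = \<theta> n * x"
    hence "\<theta> m * x * x' = \<theta> n * x * x'" by simp
    hence "\<theta> m = \<theta> n" using assms(2) by (simp add: mult.assoc)
    thus "m = n" using assms(1) by (meson bij_def injD)
  qed
  show "surj (\<lambda>m. \<theta> m * x)"
    unfolding surj_def
  proof
    fix y
    obtain m where "\<theta> m = y * x'" using assms(1) by (metis bij_pointE)
    hence "y = \<theta> m * x" using assms(2) by (metis mult.assoc mult.commute mult_1_right)
    thus "\<exists>m. y = \<theta> m * x" ..
  qed
qed

lemma equiv_if_reflects_equiv:
  assumes eqB: "equiv B RB" and RA: "RA \<subseteq> A \<times> A" and maps: "\<Phi> ` A \<subseteq> B"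
    and iff: "\<And>x y. x \<in> A \<Longrightarrow> y \<in> A \<Longrightarrow> (x, y) \<in> RA \<longleftrightarrow> (\<Phi> x, \<Phi> y) \<in> RB"
  shows "equiv A RA"
proof (rule equivI)
  show "refl_on A RA"
  proof (rule refl_onI)
    fix x assume x: "x \<in> A"
    hence "(\<Phi> x, \<Phi> x) \<in> RB" using eqB maps by (meson equiv_def image_subset_iff refl_onD)
    thus "(x, x) \<in> RA" using iff[OF x x] by blast
  qed
  show "sym RA"
  proof (rule symI)
    fix x y assume xy: "(x, y) \<in> RA"
    hence "x \<in> A" "y \<in> A" using RA by auto
    thus "(y, x) \<in> RA" using xy iff eqB by (meson equiv_def symD)
  qed
  show "trans RA"
  proof (rule transI)
    fix x y z assume xy: "(x, y) \<in> RA" and yz: "(y, z) \<in> RA"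
    hence "x \<in> A" "y \<in> A" "z \<in> A" using RA by auto
    thus "(x, z) \<in> RA" using xy yz iff eqB by (meson equiv_def transD)
  qed
qed (fact RA)

lemma Image_image_equiv_class:
  assumes "equiv B RB" "equiv A RA" "\<Phi> ` A \<subseteq> B"
    and "\<And>x y. x \<in> A \<Longrightarrow> y \<in> A \<Longrightarrow> (x, y) \<in> RA \<longleftrightarrow> (\<Phi> x, \<Phi> y) \<in> RB"
    and "x \<in> A"
  shows "RB `` (\<Phi> ` (RA `` {x})) = RB `` {\<Phi> x}"
proof
  show "RB `` (\<Phi> ` (RA `` {x})) \<subseteq> RB `` {\<Phi> x}"
  proof
    fix z assume "z \<in> RB `` (\<Phi> ` (RA `` {x}))"
    then obtain x' where xx': "(x, x') \<in> RA" and x'z: "(\<Phi> x', z) \<in> RB" by auto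
    have "x' \<in> A" using xx' assms(2) equiv_type by blast
    hence "(\<Phi> x, \<Phi> x') \<in> RB" using xx' assms(4)[OF assms(5)] by blast
    with x'z show "z \<in> RB `` {\<Phi> x}" using assms(1) unfolding equiv_def trans_def by blast
  qed
  have "(x, x) \<in> RA" using assms(2,5) by (meson equiv_def refl_onD)
  thus "RB `` {\<Phi> x} \<subseteq> RB `` (\<Phi> ` (RA `` {x}))" by auto
qed

lemma ex_bij_betw_quotients:
  assumes eqB: "equiv B RB" and RA: "RA \<subseteq> A \<times> A" and maps: "\<Phi> ` A \<subseteq> B"
    and surj: "\<And>y. y \<in> B \<Longrightarrow> \<exists>x\<in>A. (\<Phi> x, y) \<in> RB"
    and iff: "\<And>x y. x \<in> A \<Longrightarrow> y \<in> A \<Longrightarrow> (x, y) \<in> RA \<longleftrightarrow> (\<Phi> x, \<Phi> y) \<in> RB"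
  shows "\<exists>F. bij_betw F (A // RA) (B // RB)"
proof -
  have eqA: "equiv A RA" by (rule equiv_if_reflects_equiv[OF eqB RA maps iff])
  define F where "F X = RB `` (\<Phi> ` X)" for X
  have F_class: "F (RA `` {x}) = RB `` {\<Phi> x}" if "x \<in> A" for x
    unfolding F_def by (rule Image_image_equiv_class[OF eqB eqA maps iff that])
  have "bij_betw F (A // RA) (B // RB)"
  proof (rule bij_betw_imageI)
    show "inj_on F (A // RA)"
    proof (rule inj_onI)
      fix X Y assume X: "X \<in> A // RA" and Y: "Y \<in> A // RA" and eq: "F X = F Y"
      obtain x where x: "x \<in> A" "X = RA `` {x}" using X by (rule quotientE)
      obtain y where y: "y \<in> A" "Y = RA `` {y}" using Y by (rule quotientE)
      have "RB `` {\<Phi> x} = RB `` {\<Phi> y}" using eq F_class x y by simp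
      hence "(x, y) \<in> RA" using eqB maps iff x y by (simp add: eq_equiv_class_iff image_subset_iff)
      thus "X = Y" using x y eqA by (simp add: equiv_class_eq)
    qed
    show "F ` (A // RA) = B // RB"
    proof
      show "F ` (A // RA) \<subseteq> B // RB"
      proof
        fix Z assume "Z \<in> F ` (A // RA)"
        then obtain X where "X \<in> A // RA" "Z = F X" by blast
        then obtain x where "x \<in> A" "Z = RB `` {\<Phi> x}" by (metis quotientE F_class)
        thus "Z \<in> B // RB" using maps by (auto intro: quotientI)
      qed
      show "B // RB \<subseteq> F ` (A // RA)"
      proof
        fix Z assume "Z \<in> B // RB"
        then obtain y where y: "y \<in> B" "Z = RB `` {y}" by (auto elim!: quotientE)
        obtain x where x: "x \<in> A" "(\<Phi> x, y) \<in> RB" using surj y by blast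
        hence "Z = F (RA `` {x})" using F_class eqB y by (simp add: equiv_class_eq)
        thus "Z \<in> F ` (A // RA)" using x by (auto simp: quotient_def)
      qed
    qed
  qed
  thus ?thesis by blast
qed

lemma idempotent_unit_eq_1:
  fixes a :: "'a::comm_monoid_mult"
  assumes "a * a = a" "a dvd 1"
  shows "a = 1"
proof -
  obtain a' where a': "1 = a * a'" using assms(2) by (rule dvdE)
  have "a = a * a * a'" using assms(1) a' by (metis mult.assoc mult.right_neutral)
  also have "\<dots> = 1" using assms(1) a' by (metis mult.assoc)
  finally show ?thesis .
qed

locale graded_S_action =
  fixes G :: "('g, 'm) monoid_scheme" (structure) and \<pi> :: "'g \<Rightarrow> int" and act :: "'g \<Rightarrow> S \<Rightarrow> S"
  assumes graded: "C2_graded_group G \<pi>" and action: "valid_action G \<pi> act"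
begin

sublocale group G
  using graded by (simp add: C2_graded_group_def)

lemma act_one: "act \<one> = id"
  using action by (simp add: valid_action_def)

lemma act_mult: "\<sigma> \<in> carrier G \<Longrightarrow> \<tau> \<in> carrier G \<Longrightarrow> act (\<sigma> \<otimes> \<tau>) x = act \<sigma> (act \<tau> x)"
  using action by (simp add: valid_action_def)

lemma gen_alg_aut_act: "\<sigma> \<in> carrier G \<Longrightarrow> gen_alg_aut (\<pi> \<sigma>) (act \<sigma>)"
  using action by (simp add: valid_action_def)

lemma act_add: "\<sigma> \<in> carrier G \<Longrightarrow> act \<sigma> (f + g) = act \<sigma> f + act \<sigma> g"
  using gen_alg_aut_act by (simp add: gen_alg_aut_def)

lemma act_times: "\<sigma> \<in> carrier G \<Longrightarrow> act \<sigma> (f * g) = act \<sigma> f * act \<sigma> g"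
  using gen_alg_aut_act by (simp add: gen_alg_aut_def)

lemma act_1: "\<sigma> \<in> carrier G \<Longrightarrow> act \<sigma> 1 = 1"
  using gen_alg_aut_act by (simp add: gen_alg_aut_def)

lemma act_0: "\<sigma> \<in> carrier G \<Longrightarrow> act \<sigma> 0 = 0"
  using act_add[of \<sigma> 0 0] by simp

lemma bij_act: "\<sigma> \<in> carrier G \<Longrightarrow> bij (act \<sigma>)"
  using gen_alg_aut_act by (simp add: gen_alg_aut_def)

lemma act_sc_mult:
  assumes "\<sigma> \<in> carrier G"
  shows "act \<sigma> (sc c * f) = sc (conj_pi (\<pi> \<sigma>) c) * act \<sigma> f"
proof -
  have "\<pi> \<sigma> = 1 \<or> \<pi> \<sigma> = -1" using graded assms by (simp add: C2_graded_group_def)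
  thus ?thesis using gen_alg_aut_act[OF assms] by (auto simp: gen_alg_aut_def conj_pi_def)
qed

lemma act_sc: "\<sigma> \<in> carrier G \<Longrightarrow> act \<sigma> (sc c) = sc (conj_pi (\<pi> \<sigma>) c)"
  using act_sc_mult[of \<sigma> c 1] act_1[of \<sigma>] by simp

lemma act_unit: "\<sigma> \<in> carrier G \<Longrightarrow> b * p = 1 \<Longrightarrow> act \<sigma> b * act \<sigma> p = 1"
  by (metis act_times act_1)

lemma coboundary_inverse:
  assumes \<sigma>: "\<sigma> \<in> carrier G" and bp: "b * p = 1" and cob: "b * x = y * act \<sigma> b"
  shows "p * y = x * act \<sigma> p"
proof -
  have "p * y = p * y * (act \<sigma> b * act \<sigma> p)" using act_unit[OF \<sigma> bp] by simp
  also have "\<dots> = p * (y * act \<sigma> b) * act \<sigma> p" by (simp only: mult_ac)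
  also have "\<dots> = (b * p) * x * act \<sigma> p" by (simp only: cob[symmetric] mult_ac)
  finally show ?thesis using bp by simp
qed

lemma hom_deg_1_act_U: "\<sigma> \<in> carrier G \<Longrightarrow> hom_deg 1 (act \<sigma> U)"
  using action hom_deg_1_U by (simp add: valid_action_def degree_preserving_def)

lemma act_UV: "\<sigma> \<in> carrier G \<Longrightarrow> act \<sigma> (U * V) = U * V"
  using action by (simp add: valid_action_def)

lemma real_eq_structs_at:
  assumes "us \<in> real_eq_structs G act" "\<sigma> \<in> carrier G"
  shows "semilin (act (inv \<sigma>)) (fst (us \<sigma>))" "semilin (act (inv \<sigma>)) (snd (us \<sigma>))"
    "bij (fst (us \<sigma>))" "bij (snd (us \<sigma>))" "closed_uv (us \<sigma>)"
  using assms unfolding real_eq_structs_def by blast+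

lemma real_eq_structs_comp:
  assumes "us \<in> real_eq_structs G act" "\<sigma>1 \<in> carrier G" "\<sigma>2 \<in> carrier G"
  shows "us (\<sigma>2 \<otimes> \<sigma>1) = comp2 (us \<sigma>1) (us \<sigma>2)"
  using assms by (simp add: real_eq_structs_def)

text \<open>Closedness of \<open>us (inv \<sigma>)\<close> makes \<open>\<sigma>(u)\<close> a multiple of \<open>u\<close> in \<open>S\<close>; being
  homogeneous of degree 1, it is a scalar multiple.\<close>
lemma act_U_scalar_if_real_eq_struct:
  assumes us: "us \<in> real_eq_structs G act" and \<sigma>: "\<sigma> \<in> carrier G"
  shows "\<exists>c. act \<sigma> U = sc c * U"
proof -
  let ?A = "fst (us (inv \<sigma>))" and ?B = "snd (us (inv \<sigma>))"
  have inv_\<sigma>: "inv \<sigma> \<in> carrier G" using \<sigma> by simp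
  have semB: "semilin (act \<sigma>) ?B"
    using real_eq_structs_at(2)[OF us inv_\<sigma>] \<sigma> by simp
  have bijB: "bij ?B" and closed: "closed_uv (us (inv \<sigma>))"
    using real_eq_structs_at(4,5)[OF us inv_\<sigma>] by simp_all
  have "?B (U * 1) = U * ?A 1" using closed unfolding closed_uv_def by blast
  hence eq: "act \<sigma> U * ?B 1 = U * ?A 1" using semilin_apply[OF semB, of U] by simp
  obtain b where b: "1 = ?B 1 * b" using semilin_bij_unit[OF semB bijB] by (rule dvdE)
  have "act \<sigma> U = act \<sigma> U * ?B 1 * b" by (simp add: mult.assoc flip: b)
  also have "\<dots> = U * (?A 1 * b)" by (simp add: eq mult.assoc)
  finally have "act \<sigma> U = U * (?A 1 * b)" .
  thus ?thesis using hom_deg_1_act_U[OF \<sigma>] hom_deg_1_U_mult by metis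
qed

lemma cocycle_if_act_U_scalar:
  assumes scalar: "\<And>\<sigma>. \<sigma> \<in> carrier G \<Longrightarrow> \<exists>c. act \<sigma> U = sc c * U"
  shows "\<exists>\<chi>\<in>Z1_C G \<pi>. \<forall>\<sigma>\<in>carrier G.
           act \<sigma> U = sc (\<chi> \<sigma>) * U \<and> act \<sigma> V = sc (inverse (\<chi> \<sigma>)) * V"
proof -
  define \<chi> where "\<chi> \<sigma> = (SOME c. act \<sigma> U = sc c * U)" for \<sigma>
  have act_U: "act \<sigma> U = sc (\<chi> \<sigma>) * U" if "\<sigma> \<in> carrier G" for \<sigma>
    unfolding \<chi>_def using scalar[OF that] by (rule someI_ex)
  have nonzero: "\<chi> \<sigma> \<noteq> 0" if \<sigma>: "\<sigma> \<in> carrier G" for \<sigma>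
  proof
    assume "\<chi> \<sigma> = 0"
    hence "act \<sigma> U = act \<sigma> 0" using act_U[OF \<sigma>] act_0[OF \<sigma>] by (simp add: sc_def)
    hence "U = 0" using bij_act[OF \<sigma>] by (meson bij_def injD)
    thus False using U_neq_zero by simp
  qed
  have "sc (\<chi> \<one>) * U = act \<one> U" using act_U[OF one_closed] by (rule sym)
  also have "\<dots> = sc 1 * U" by (simp add: act_one)
  finally have normalized: "\<chi> \<one> = 1" using U_neq_zero sc_eq_iff[of "\<chi> \<one>" 1] by simp
  have cocycle: "\<chi> (\<sigma> \<otimes> \<tau>) = \<chi> \<sigma> * conj_pi (\<pi> \<sigma>) (\<chi> \<tau>)"
    if \<sigma>: "\<sigma> \<in> carrier G" and \<tau>: "\<tau> \<in> carrier G" for \<sigma> \<tau>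
  proof -
    have "sc (\<chi> (\<sigma> \<otimes> \<tau>)) * U = act \<sigma> (act \<tau> U)"
      using act_U[of "\<sigma> \<otimes> \<tau>"] act_mult[OF \<sigma> \<tau>] \<sigma> \<tau> by simp
    also have "\<dots> = sc (\<chi> \<sigma> * conj_pi (\<pi> \<sigma>) (\<chi> \<tau>)) * U"
      using act_U[OF \<tau>] act_U[OF \<sigma>] act_sc_mult[OF \<sigma>] by (simp add: sc_mult[symmetric] mult_ac)
    finally show ?thesis using U_neq_zero by (simp add: sc_eq_iff)
  qed
  have act_V: "act \<sigma> V = sc (inverse (\<chi> \<sigma>)) * V" if \<sigma>: "\<sigma> \<in> carrier G" for \<sigma>
  proof -
    have "U * (sc (\<chi> \<sigma>) * act \<sigma> V) = U * V"
      using act_UV[OF \<sigma>] act_times[OF \<sigma>, of U V] act_U[OF \<sigma>] by (simp add: mult_ac)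
    hence "sc (\<chi> \<sigma>) * act \<sigma> V = V" using U_neq_zero by simp
    hence "sc (inverse (\<chi> \<sigma>)) * V = sc (inverse (\<chi> \<sigma>) * \<chi> \<sigma>) * act \<sigma> V"
      by (simp add: sc_mult[symmetric] mult.assoc)
    thus ?thesis using nonzero[OF \<sigma>] by simp
  qed
  have "\<chi> \<in> Z1_C G \<pi>" using nonzero normalized cocycle by (simp add: Z1_C_def)
  thus ?thesis using act_U act_V by blast
qed

lemma cohom_S_sym:
  assumes "(c, c') \<in> cohom_S G act"
  shows "(c', c) \<in> cohom_S G act"
proof -
  obtain b where cz: "c \<in> Z1_S G act" "c' \<in> Z1_S G act" and "b dvd 1"
    and bc: "\<And>\<sigma>. \<sigma> \<in> carrier G \<Longrightarrow> b * c' \<sigma> = c \<sigma> * act \<sigma> b"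
    using assms by (auto simp: cohom_S_def)
  then obtain p where bp: "b * p = 1" by (metis dvdE)
  have "p * c \<sigma> = c' \<sigma> * act \<sigma> p" if "\<sigma> \<in> carrier G" for \<sigma>
    using coboundary_inverse[OF that bp bc[OF that]] .
  moreover have "p dvd 1" using bp by (metis dvdI mult.commute)
  ultimately show ?thesis using cz by (auto simp: cohom_S_def)
qed

lemma cohom_S_trans:
  assumes "(c, c') \<in> cohom_S G act" "(c', c'') \<in> cohom_S G act"
  shows "(c, c'') \<in> cohom_S G act"
proof -
  obtain b1 b2 where cz: "c \<in> Z1_S G act" "c'' \<in> Z1_S G act" and "b1 dvd 1" "b2 dvd 1"
    and b1: "\<And>\<sigma>. \<sigma> \<in> carrier G \<Longrightarrow> b1 * c' \<sigma> = c \<sigma> * act \<sigma> b1"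
    and b2: "\<And>\<sigma>. \<sigma> \<in> carrier G \<Longrightarrow> b2 * c'' \<sigma> = c' \<sigma> * act \<sigma> b2"
    using assms by (auto simp: cohom_S_def)
  have "(b1 * b2) * c'' \<sigma> = c \<sigma> * act \<sigma> (b1 * b2)" if \<sigma>: "\<sigma> \<in> carrier G" for \<sigma>
  proof -
    have "(b1 * b2) * c'' \<sigma> = b1 * (b2 * c'' \<sigma>)" by (simp only: mult.assoc)
    also have "\<dots> = (b1 * c' \<sigma>) * act \<sigma> b2" by (simp only: b2[OF \<sigma>] mult.assoc)
    also have "\<dots> = c \<sigma> * act \<sigma> (b1 * b2)" by (simp only: b1[OF \<sigma>] act_times[OF \<sigma>] mult.assoc)
    finally show ?thesis .
  qed
  moreover have "b1 * b2 dvd 1" using \<open>b1 dvd 1\<close> \<open>b2 dvd 1\<close> by (metis mult_dvd_mono mult_1_left)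
  ultimately show ?thesis using cz by (auto simp: cohom_S_def)
qed

lemma cohom_S_equiv: "equiv (Z1_S G act) (cohom_S G act)"
proof (rule equivI)
  show "refl_on (Z1_S G act) (cohom_S G act)"
    by (rule refl_onI) (auto simp: cohom_S_def act_1 intro!: exI[where x = 1])
  show "sym (cohom_S G act)" by (rule symI) (rule cohom_S_sym)
  show "trans (cohom_S G act)" by (rule transI) (rule cohom_S_trans)
qed (auto simp: cohom_S_def)

end

locale diagonal_action = graded_S_action +
  fixes \<chi> :: "'g \<Rightarrow> complex"
  assumes cocycle_\<chi>: "\<chi> \<in> Z1_C G \<pi>"
    and act_U_V: "\<forall>\<sigma>\<in>carrier G. act \<sigma> U = sc (\<chi> \<sigma>) * U \<and> act \<sigma> V = sc (inverse (\<chi> \<sigma>)) * V"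
begin

lemma act_U: "\<sigma> \<in> carrier G \<Longrightarrow> act \<sigma> U = sc (\<chi> \<sigma>) * U"
  using act_U_V by blast

lemma act_V: "\<sigma> \<in> carrier G \<Longrightarrow> act \<sigma> V = sc (inverse (\<chi> \<sigma>)) * V"
  using act_U_V by blast

lemma \<chi>_nonzero: "\<sigma> \<in> carrier G \<Longrightarrow> \<chi> \<sigma> \<noteq> 0"
  using cocycle_\<chi> by (simp add: Z1_C_def)

lemma \<chi>_mult: "\<sigma> \<in> carrier G \<Longrightarrow> \<tau> \<in> carrier G \<Longrightarrow> \<chi> (\<sigma> \<otimes> \<tau>) = \<chi> \<sigma> * conj_pi (\<pi> \<sigma>) (\<chi> \<tau>)"
  using cocycle_\<chi> by (simp add: Z1_C_def)

text \<open>Closedness forces \<open>u\<^sup>1\<^sub>\<sigma> = \<kappa> \<sigma> \<cdot> u\<^sup>0\<^sub>\<sigma>\<close> on the two components of a Real structure.\<close>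
definition \<kappa> :: "'g \<Rightarrow> complex" where "\<kappa> \<sigma> = inverse (\<chi> (inv \<sigma>))"

lemma sc_\<chi>_inv_sc_\<kappa>: "\<sigma> \<in> carrier G \<Longrightarrow> sc (\<chi> (inv \<sigma>)) * sc (\<kappa> \<sigma>) = 1"
  using \<chi>_nonzero[of "inv \<sigma>"] by (simp add: \<kappa>_def sc_mult)

definition struct_of_cocycle :: "('g \<Rightarrow> S) \<Rightarrow> 'g \<Rightarrow> (S \<Rightarrow> S) \<times> (S \<Rightarrow> S)" where
  "struct_of_cocycle c \<sigma> =
     ((\<lambda>m. act (inv \<sigma>) m * c (inv \<sigma>)), (\<lambda>m. act (inv \<sigma>) m * (sc (\<kappa> \<sigma>) * c (inv \<sigma>))))"

definition cocycle_of_struct :: "('g \<Rightarrow> (S \<Rightarrow> S) \<times> (S \<Rightarrow> S)) \<Rightarrow> 'g \<Rightarrow> S" where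
  "cocycle_of_struct us \<sigma> = fst (us (inv \<sigma>)) 1"

lemma struct_of_cocycle_at:
  assumes unit: "c (inv \<sigma>) dvd 1" and \<sigma>: "\<sigma> \<in> carrier G"
  shows "semilin (act (inv \<sigma>)) (fst (struct_of_cocycle c \<sigma>))"
    "semilin (act (inv \<sigma>)) (snd (struct_of_cocycle c \<sigma>))"
    "bij (fst (struct_of_cocycle c \<sigma>))" "bij (snd (struct_of_cocycle c \<sigma>))"
    "closed_uv (struct_of_cocycle c \<sigma>)"
proof -
  let ?t = "inv \<sigma>"
  have t: "?t \<in> carrier G" using \<sigma> by simp
  obtain a' where a': "c ?t * a' = 1" using unit by (metis dvdE)
  show "semilin (act ?t) (fst (struct_of_cocycle c \<sigma>))" "semilin (act ?t) (snd (struct_of_cocycle c \<sigma>))"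
    by (simp_all add: struct_of_cocycle_def semilin_def act_add[OF t] act_times[OF t] ring_distribs mult_ac)
  show "bij (fst (struct_of_cocycle c \<sigma>))"
    unfolding struct_of_cocycle_def fst_conv by (rule bij_mult_right_unit[OF bij_act[OF t] a'])
  have "(sc (\<kappa> \<sigma>) * c ?t) * (sc (\<chi> ?t) * a') = 1"
    using sc_\<chi>_inv_sc_\<kappa>[OF \<sigma>] a' by (metis mult.commute mult.left_commute mult.right_neutral)
  thus "bij (snd (struct_of_cocycle c \<sigma>))"
    unfolding struct_of_cocycle_def snd_conv by (rule bij_mult_right_unit[OF bij_act[OF t]])
  have "act ?t (U * m) * (sc (\<kappa> \<sigma>) * c ?t) = (sc (\<chi> ?t) * sc (\<kappa> \<sigma>)) * (U * (act ?t m * c ?t))" for m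
    unfolding act_times[OF t] act_U[OF t] by (simp only: mult_ac)
  moreover have "act ?t (V * m) * c ?t = V * (act ?t m * (sc (\<kappa> \<sigma>) * c ?t))" for m
    using act_V[OF t] act_times[OF t] by (simp add: mult_ac \<kappa>_def)
  ultimately show "closed_uv (struct_of_cocycle c \<sigma>)"
    using sc_\<chi>_inv_sc_\<kappa>[OF \<sigma>] by (simp add: closed_uv_def struct_of_cocycle_def)
qed

lemma struct_of_cocycle_comp:
  assumes c: "c \<in> Z1_S G act" and \<sigma>1: "\<sigma>1 \<in> carrier G" and \<sigma>2: "\<sigma>2 \<in> carrier G"
  shows "struct_of_cocycle c (\<sigma>2 \<otimes> \<sigma>1) = comp2 (struct_of_cocycle c \<sigma>1) (struct_of_cocycle c \<sigma>2)"
proof -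
  define x y where "x = inv \<sigma>1" and "y = inv \<sigma>2"
  have x: "x \<in> carrier G" and y: "y \<in> carrier G" using \<sigma>1 \<sigma>2 by (simp_all add: x_def y_def)
  have c_mult: "c (x \<otimes> y) = c x * act x (c y)" using c x y by (simp add: Z1_S_def)
  have inv_prod: "inv (\<sigma>2 \<otimes> \<sigma>1) = x \<otimes> y" using \<sigma>1 \<sigma>2 by (simp add: x_def y_def inv_mult_group)
  have \<kappa>_mult: "\<kappa> (\<sigma>2 \<otimes> \<sigma>1) = conj_pi (\<pi> x) (\<kappa> \<sigma>2) * \<kappa> \<sigma>1"
    unfolding \<kappa>_def inv_prod using \<chi>_mult[OF x y]
    by (simp add: x_def[symmetric] y_def[symmetric] conj_pi_inverse mult.commute)
  have sc_\<kappa>: "sc (\<kappa> (\<sigma>2 \<otimes> \<sigma>1)) = sc (conj_pi (\<pi> x) (\<kappa> \<sigma>2)) * sc (\<kappa> \<sigma>1)"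
    by (simp only: \<kappa>_mult sc_mult)
  have snd_eq: "act (x \<otimes> y) m * (sc (\<kappa> (\<sigma>2 \<otimes> \<sigma>1)) * c (x \<otimes> y))
      = act x (act y m * (sc (\<kappa> \<sigma>2) * c y)) * (sc (\<kappa> \<sigma>1) * c x)" for m
    unfolding act_mult[OF x y] c_mult act_times[OF x] act_sc[OF x] sc_\<kappa> by (simp only: mult_ac)
  have fst_eq: "act (x \<otimes> y) m * c (x \<otimes> y) = act x (act y m * c y) * c x" for m
    unfolding act_mult[OF x y] c_mult act_times[OF x] by (simp only: mult_ac)
  show ?thesis
    unfolding struct_of_cocycle_def comp2_def inv_prod
    using fst_eq snd_eq by (simp add: x_def[symmetric] y_def[symmetric] o_def)
qed

lemma struct_of_cocycle_mem:
  assumes "c \<in> Z1_S G act"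
  shows "struct_of_cocycle c \<in> real_eq_structs G act"
  using assms struct_of_cocycle_at struct_of_cocycle_comp
  by (simp add: real_eq_structs_def Z1_S_def)

lemma cocycle_of_struct_of_cocycle:
  "\<sigma> \<in> carrier G \<Longrightarrow> cocycle_of_struct (struct_of_cocycle c) \<sigma> = c \<sigma>"
  by (simp add: cocycle_of_struct_def struct_of_cocycle_def act_1)

lemma real_eq_struct_components:
  assumes us: "us \<in> real_eq_structs G act" and \<sigma>: "\<sigma> \<in> carrier G"
  shows "fst (us \<sigma>) m = act (inv \<sigma>) m * fst (us \<sigma>) 1"
    and "snd (us \<sigma>) m = act (inv \<sigma>) m * (sc (\<kappa> \<sigma>) * fst (us \<sigma>) 1)"
    and "fst (us \<sigma>) 1 dvd 1"
proof -
  let ?t = "inv \<sigma>" and ?A = "fst (us \<sigma>)" and ?B = "snd (us \<sigma>)"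
  have t: "?t \<in> carrier G" using \<sigma> by simp
  have semA: "semilin (act ?t) ?A" and semB: "semilin (act ?t) ?B"
    and bijA: "bij ?A" and closed: "closed_uv (us \<sigma>)"
    using real_eq_structs_at[OF us \<sigma>] by simp_all
  show "?A m = act ?t m * ?A 1" by (rule semilin_apply[OF semA])
  show "?A 1 dvd 1" by (rule semilin_bij_unit[OF semA bijA])
  have "?B (U * 1) = U * ?A 1" using closed unfolding closed_uv_def by blast
  hence "act ?t U * ?B 1 = U * ?A 1" using semilin_apply[OF semB, of U] by simp
  hence "U * (sc (\<chi> ?t) * ?B 1) = U * ?A 1" using act_U[OF t] by (simp add: mult_ac)
  hence A_1: "sc (\<chi> ?t) * ?B 1 = ?A 1" using U_neq_zero by simp
  have "?B 1 = (sc (\<chi> ?t) * sc (\<kappa> \<sigma>)) * ?B 1" using sc_\<chi>_inv_sc_\<kappa>[OF \<sigma>] by simp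
  also have "\<dots> = sc (\<kappa> \<sigma>) * ?A 1" by (simp only: mult_ac flip: A_1)
  finally show "?B m = act ?t m * (sc (\<kappa> \<sigma>) * ?A 1)" using semilin_apply[OF semB, of m] by simp
qed

lemma cocycle_of_struct_mem:
  assumes us: "us \<in> real_eq_structs G act"
  shows "cocycle_of_struct us \<in> Z1_S G act"
proof -
  let ?c = "cocycle_of_struct us"
  have unit: "?c \<sigma> dvd 1" if "\<sigma> \<in> carrier G" for \<sigma>
    unfolding cocycle_of_struct_def using real_eq_struct_components(3)[OF us] that by simp
  have normalized: "?c \<one> = 1"
  proof -
    define a where "a = fst (us \<one>) 1"
    have "us \<one> = comp2 (us \<one>) (us \<one>)"
      using real_eq_structs_comp[OF us one_closed one_closed] by simp
    hence "a = fst (us \<one>) a" unfolding a_def comp2_def by (metis comp_apply fst_conv)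
    also have "\<dots> = a * a" using real_eq_struct_components(1)[OF us one_closed, of a] act_one
      by (simp add: a_def)
    finally have "a * a = a" ..
    hence "a = 1" using real_eq_struct_components(3)[OF us one_closed] a_def idempotent_unit_eq_1 by blast
    thus ?thesis by (simp add: cocycle_of_struct_def a_def)
  qed
  have cocycle: "?c (\<sigma> \<otimes> \<tau>) = ?c \<sigma> * act \<sigma> (?c \<tau>)"
    if \<sigma>: "\<sigma> \<in> carrier G" and \<tau>: "\<tau> \<in> carrier G" for \<sigma> \<tau>
  proof -
    have "?c (\<sigma> \<otimes> \<tau>) = fst (us (inv \<tau> \<otimes> inv \<sigma>)) 1"
      unfolding cocycle_of_struct_def using \<sigma> \<tau> by (simp add: inv_mult_group)
    also have "\<dots> = fst (us (inv \<sigma>)) (?c \<tau>)"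
      using real_eq_structs_comp[OF us, of "inv \<sigma>" "inv \<tau>"] \<sigma> \<tau>
      by (simp add: comp2_def cocycle_of_struct_def)
    also have "\<dots> = act \<sigma> (?c \<tau>) * ?c \<sigma>"
      using real_eq_struct_components(1)[OF us, of "inv \<sigma>" "?c \<tau>"] \<sigma>
      by (simp add: cocycle_of_struct_def)
    finally show ?thesis by (simp add: mult.commute)
  qed
  show ?thesis using unit normalized cocycle by (simp add: Z1_S_def)
qed

text \<open>An isomorphism \<open>f\<close> of \<open>{u,v}\<close> is multiplication by a unit \<open>P\<close>, and intertwining
  the two structures says exactly that \<open>P\<inverse>\<close> is a coboundary between their cocycles.\<close>
lemma cohom_if_struct_iso:
  assumes us: "us \<in> real_eq_structs G act" and us': "us' \<in> real_eq_structs G act"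
    and iso: "(us, us') \<in> struct_iso G act"
  shows "(cocycle_of_struct us, cocycle_of_struct us') \<in> cohom_S G act"
proof -
  let ?c = "cocycle_of_struct us" and ?c' = "cocycle_of_struct us'"
  obtain f where lin: "semilin id (fst f)" and bij: "bij (fst f)"
    and intertwines: "\<forall>\<sigma>\<in>carrier G. comp2 (us' \<sigma>) f = comp2 f (us \<sigma>)"
    using iso unfolding struct_iso_def by blast
  define P where "P = fst f 1"
  have f_mult: "fst f m = m * P" for m
    using semilin_apply[OF lin, of m] by (simp add: P_def mult.commute)
  obtain Pi where Pi: "P * Pi = 1"
    using semilin_bij_unit[OF lin bij] by (metis P_def dvdE)
  have "Pi * ?c' \<sigma> = ?c \<sigma> * act \<sigma> Pi" if \<sigma>: "\<sigma> \<in> carrier G" for \<sigma>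
  proof -
    let ?t = "inv \<sigma>"
    have t: "?t \<in> carrier G" using \<sigma> by simp
    have "fst (comp2 (us' ?t) f) 1 = fst (comp2 f (us ?t)) 1" using intertwines t by simp
    hence "fst (us' ?t) P = fst (us ?t) 1 * P" by (simp add: comp2_def f_mult)
    hence P_coboundary: "act \<sigma> P * ?c' \<sigma> = ?c \<sigma> * P"
      using real_eq_struct_components(1)[OF us' t, of P] \<sigma> by (simp add: cocycle_of_struct_def)
    hence "P * ?c \<sigma> = ?c' \<sigma> * act \<sigma> P" by (simp only: mult.commute)
    thus ?thesis by (rule coboundary_inverse[OF \<sigma> Pi])
  qed
  moreover have "Pi dvd 1" using Pi by (metis dvdI mult.commute)
  ultimately show ?thesis
    using cocycle_of_struct_mem[OF us] cocycle_of_struct_mem[OF us'] by (auto simp: cohom_S_def)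
qed

lemma struct_iso_if_cohom:
  assumes us: "us \<in> real_eq_structs G act" and us': "us' \<in> real_eq_structs G act"
    and cohom: "(cocycle_of_struct us, cocycle_of_struct us') \<in> cohom_S G act"
  shows "(us, us') \<in> struct_iso G act"
proof -
  obtain b where b_unit: "b dvd 1" and coboundary:
    "\<And>\<sigma>. \<sigma> \<in> carrier G \<Longrightarrow> b * cocycle_of_struct us' \<sigma> = cocycle_of_struct us \<sigma> * act \<sigma> b"
    using cohom by (auto simp: cohom_S_def)
  obtain p where bp: "b * p = 1" using b_unit by (metis dvdE)
  define f where "f = ((\<lambda>m::S. m * p), (\<lambda>m::S. m * p))"
  have lin: "semilin id (fst f)" "semilin id (snd f)"
    by (simp_all add: f_def semilin_def ring_distribs mult_ac)
  have "bij (\<lambda>m. id m * p)" by (rule bij_mult_right_unit[of id p b]) (simp_all add: bp mult.commute)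
  hence bij: "bij (fst f)" "bij (snd f)" by (simp_all add: f_def)
  have closed: "closed_uv f" by (simp add: closed_uv_def f_def mult_ac)
  have "comp2 (us' \<sigma>) f = comp2 f (us \<sigma>)" if \<sigma>: "\<sigma> \<in> carrier G" for \<sigma>
  proof -
    let ?t = "inv \<sigma>" and ?a = "fst (us \<sigma>) 1" and ?a' = "fst (us' \<sigma>) 1"
    have t: "?t \<in> carrier G" using \<sigma> by simp
    have e: "b * ?a' = ?a * act ?t b"
      using coboundary[OF t] \<sigma> by (simp add: cocycle_of_struct_def)
    have p_coboundary: "act ?t p * ?a' = ?a * p"
      using coboundary_inverse[OF t bp e] by (simp add: mult.commute)
    have "fst (us' \<sigma>) (m * p) = fst (us \<sigma>) m * p" for m
      using real_eq_struct_components(1)[OF us' \<sigma>, of "m * p"] real_eq_struct_components(1)[OF us \<sigma>, of m]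
        act_times[OF t] p_coboundary by (simp add: mult_ac)
    moreover have "snd (us' \<sigma>) (m * p) = snd (us \<sigma>) m * p" for m
      using real_eq_struct_components(2)[OF us' \<sigma>, of "m * p"] real_eq_struct_components(2)[OF us \<sigma>, of m]
        act_times[OF t] p_coboundary by (simp add: mult_ac)
    ultimately show ?thesis by (simp add: comp2_def f_def fun_eq_iff)
  qed
  thus ?thesis using us us' lin bij closed unfolding struct_iso_def by blast
qed

lemma bij_betw_real_eq_struct_classes_H1:
  "\<exists>F. bij_betw F (real_eq_structs G act // struct_iso G act) (H1_S G act)"
  unfolding H1_S_def
proof (rule ex_bij_betw_quotients[where \<Phi> = cocycle_of_struct])
  show "struct_iso G act \<subseteq> real_eq_structs G act \<times> real_eq_structs G act"
    by (auto simp: struct_iso_def)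
  show "cocycle_of_struct ` real_eq_structs G act \<subseteq> Z1_S G act"
    using cocycle_of_struct_mem by blast
  show "(us, us') \<in> struct_iso G act \<longleftrightarrow> (cocycle_of_struct us, cocycle_of_struct us') \<in> cohom_S G act"
    if "us \<in> real_eq_structs G act" "us' \<in> real_eq_structs G act" for us us'
    using cohom_if_struct_iso struct_iso_if_cohom that by blast
  show "\<exists>us\<in>real_eq_structs G act. (cocycle_of_struct us, c) \<in> cohom_S G act"
    if c: "c \<in> Z1_S G act" for c
  proof
    show "struct_of_cocycle c \<in> real_eq_structs G act" by (rule struct_of_cocycle_mem[OF c])
    show "(cocycle_of_struct (struct_of_cocycle c), c) \<in> cohom_S G act"
      using cocycle_of_struct_mem[OF struct_of_cocycle_mem[OF c]] c
      by (auto simp: cohom_S_def cocycle_of_struct_of_cocycle act_1 intro!: exI[where x = 1])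
  qed
qed (rule cohom_S_equiv)

end

context graded_S_action
begin

lemma real_eq_structs_nonempty_iff:
  "real_eq_structs G act \<noteq> {} \<longleftrightarrow>
     (\<exists>\<chi>\<in>Z1_C G \<pi>. \<forall>\<sigma>\<in>carrier G.
        act \<sigma> U = sc (\<chi> \<sigma>) * U \<and> act \<sigma> V = sc (inverse (\<chi> \<sigma>)) * V)"
proof
  assume "real_eq_structs G act \<noteq> {}"
  then obtain us where "us \<in> real_eq_structs G act" by blast
  thus "\<exists>\<chi>\<in>Z1_C G \<pi>. \<forall>\<sigma>\<in>carrier G.
          act \<sigma> U = sc (\<chi> \<sigma>) * U \<and> act \<sigma> V = sc (inverse (\<chi> \<sigma>)) * V"
    by (intro cocycle_if_act_U_scalar act_U_scalar_if_real_eq_struct)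
next
  assume "\<exists>\<chi>\<in>Z1_C G \<pi>. \<forall>\<sigma>\<in>carrier G.
            act \<sigma> U = sc (\<chi> \<sigma>) * U \<and> act \<sigma> V = sc (inverse (\<chi> \<sigma>)) * V"
  then obtain \<chi> where "diagonal_action G \<pi> act \<chi>"
    by (metis diagonal_action_axioms_def diagonal_action_def graded_S_action_axioms)
  then interpret diagonal_action G \<pi> act \<chi> .
  have "(\<lambda>_. 1) \<in> Z1_S G act" by (simp add: Z1_S_def act_1)
  thus "real_eq_structs G act \<noteq> {}" using struct_of_cocycle_mem by blast
qed

lemma bij_betw_real_eq_struct_classes_H1_if_diagonal:
  assumes "\<exists>\<chi>\<in>Z1_C G \<pi>. \<forall>\<sigma>\<in>carrier G.
             act \<sigma> U = sc (\<chi> \<sigma>) * U \<and> act \<sigma> V = sc (inverse (\<chi> \<sigma>)) * V"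
  shows "\<exists>F. bij_betw F (real_eq_structs G act // struct_iso G act) (H1_S G act)"
proof -
  obtain \<chi> where "diagonal_action G \<pi> act \<chi>"
    using assms by (metis diagonal_action_axioms_def diagonal_action_def graded_S_action_axioms)
  then interpret diagonal_action G \<pi> act \<chi> .
  show ?thesis by (rule bij_betw_real_eq_struct_classes_H1)
qed

end

theorem mainTheorem8:
  fixes G :: "('g, 'm) monoid_scheme" and \<pi> :: "'g \<Rightarrow> int" and act :: "'g \<Rightarrow> S \<Rightarrow> S"
  assumes "C2_graded_group G \<pi>" and "finite (carrier G)" and "valid_action G \<pi> act"
  shows "(real_eq_structs G act \<noteq> {} \<longleftrightarrow>
            (\<exists>\<chi>\<in>Z1_C G \<pi>. \<forall>\<sigma>\<in>carrier G.
               act \<sigma> U = sc (\<chi> \<sigma>) * U \<and> act \<sigma> V = sc (inverse (\<chi> \<sigma>)) * V))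
       \<and> ((\<exists>\<chi>\<in>Z1_C G \<pi>. \<forall>\<sigma>\<in>carrier G.
               act \<sigma> U = sc (\<chi> \<sigma>) * U \<and> act \<sigma> V = sc (inverse (\<chi> \<sigma>)) * V) \<longrightarrow>
            (\<exists>F. bij_betw F (real_eq_structs G act // struct_iso G act) (H1_S G act)))"
proof -
  interpret graded_S_action G \<pi> act
    using assms(1,3) by unfold_locales
  show ?thesis
    using real_eq_structs_nonempty_iff bij_betw_real_eq_struct_classes_H1_if_diagonal by blast
qed

end
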